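(* Let $\mathbb{F}$ be a field with $\mathrm{char}(\mathbb{F})\neq 2$, let $n\geq 2$ be an integer, and let $L$ be an $n$-dimensional nonnilpotent solvable Lie algebra over $\mathbb{F}$ of breadth $1$. Then $L$ has a basis $\{x,y,z_1,z_2,\ldots,z_{n-2}\}$ such that $[x,y]=x$ and $z_1,z_2,\ldots,z_{n-2}\in Z(L)$.
   Context: For $x\in L$, the breadth of $x$ is $b(x)=\mathrm{rank}(\mathrm{ad}_x)$, and the breadth of $L$ is $b(L)=\max\{b(x)\mid x\in L\}$. $Z(L)$ denotes the center of $L$. *)

theory Defs
  imports Complex_Main
begin

definition lie_algebra :: "('a::field \<Rightarrow> 'b::ab_group_add \<Rightarrow> 'b) \<Rightarrow> ('b \<Rightarrow> 'b \<Rightarrow> 'b) \<Rightarrow> bool" where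
  "lie_algebra scl br \<longleftrightarrow>
     vector_space scl \<and>
     (\<forall>x y z. br (x + y) z = br x z + br y z) \<and>
     (\<forall>x y z. br x (y + z) = br x y + br x z) \<and>
     (\<forall>c x y. br (scl c x) y = scl c (br x y)) \<and>
     (\<forall>c x y. br x (scl c y) = scl c (br x y)) \<and>
     (\<forall>x. br x x = 0) \<and>
     (\<forall>x y z. br x (br y z) + br y (br z x) + br z (br x y) = 0)"

definition lie_bracket_set :: "('a::field \<Rightarrow> 'b::ab_group_add \<Rightarrow> 'b) \<Rightarrow> ('b \<Rightarrow> 'b \<Rightarrow> 'b) \<Rightarrow> 'b set \<Rightarrow> 'b set \<Rightarrow> 'b set" where
  "lie_bracket_set scl br A B = module.span scl {br a b | a b. a \<in> A \<and> b \<in> B}"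

fun derived_series :: "('a::field \<Rightarrow> 'b::ab_group_add \<Rightarrow> 'b) \<Rightarrow> ('b \<Rightarrow> 'b \<Rightarrow> 'b) \<Rightarrow> nat \<Rightarrow> 'b set" where
  "derived_series scl br 0 = UNIV"
| "derived_series scl br (Suc k) = lie_bracket_set scl br (derived_series scl br k) (derived_series scl br k)"

fun lower_central_series :: "('a::field \<Rightarrow> 'b::ab_group_add \<Rightarrow> 'b) \<Rightarrow> ('b \<Rightarrow> 'b \<Rightarrow> 'b) \<Rightarrow> nat \<Rightarrow> 'b set" where
  "lower_central_series scl br 0 = UNIV"
| "lower_central_series scl br (Suc k) = lie_bracket_set scl br UNIV (lower_central_series scl br k)"

definition lie_solvable :: "('a::field \<Rightarrow> 'b::ab_group_add \<Rightarrow> 'b) \<Rightarrow> ('b \<Rightarrow> 'b \<Rightarrow> 'b) \<Rightarrow> bool" where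
  "lie_solvable scl br \<longleftrightarrow> (\<exists>k. derived_series scl br k = {0})"

definition lie_nilpotent :: "('a::field \<Rightarrow> 'b::ab_group_add \<Rightarrow> 'b) \<Rightarrow> ('b \<Rightarrow> 'b \<Rightarrow> 'b) \<Rightarrow> bool" where
  "lie_nilpotent scl br \<longleftrightarrow> (\<exists>k. lower_central_series scl br k = {0})"

definition lie_center :: "('b::ab_group_add \<Rightarrow> 'b \<Rightarrow> 'b) \<Rightarrow> 'b set" where
  "lie_center br = {c. \<forall>v. br c v = 0}"

definition elem_breadth :: "('a::field \<Rightarrow> 'b::ab_group_add \<Rightarrow> 'b) \<Rightarrow> ('b \<Rightarrow> 'b \<Rightarrow> 'b) \<Rightarrow> 'b \<Rightarrow> nat" where
  "elem_breadth scl br x = vector_space.dim scl (range (br x))"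

text \<open>b(L) = max of b(x) over x in L (finite-dimensional case: a maximum of a bounded set).\<close>
definition lie_breadth :: "('a::field \<Rightarrow> 'b::ab_group_add \<Rightarrow> 'b) \<Rightarrow> ('b \<Rightarrow> 'b \<Rightarrow> 'b) \<Rightarrow> nat" where
  "lie_breadth scl br = Max (range (elem_breadth scl br))"

definition has_dim :: "('a::field \<Rightarrow> 'b::ab_group_add \<Rightarrow> 'b) \<Rightarrow> nat \<Rightarrow> bool" where
  "has_dim scl n \<longleftrightarrow> (\<exists>B. finite B \<and> card B = n \<and> \<not> module.dependent scl B \<and> module.span scl B = UNIV)"

end

theory Submission
  imports Defs
begin

text \<open>Breadth at most 1 means that every \<open>ad x\<close> has rank at most 1.
  If no \<open>ad y\<close> has a nonzero eigenvalue, then every \<open>ad x\<close> squares to zero, so the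
  operators \<open>ad a\<close> and \<open>ad b\<close> anticommute; then \<open>[a,[b,w]]\<close> lies in the image of \<open>ad b\<close>,
  which is spanned by \<open>[b,w]\<close>, making \<open>[b,w]\<close> an eigenvector of \<open>ad a\<close>, so \<open>[a,[b,w]] = 0\<close>
  and \<open>L\<close> is nilpotent.  Otherwise there are \<open>v \<noteq> 0\<close> and \<open>y\<close> with \<open>[v,y] = v\<close>; then the
  image of every \<open>ad a\<close> lies in the line through \<open>v\<close>, so the centralizer of \<open>v\<close> and \<open>y\<close>
  is central, and it is a complement of \<open>span {v, y}\<close>.\<close>

context vector_space
begin

lemma subset_span_singleton_if_dim_le_1:
  assumes "finite B" "span B = UNIV" "dim S \<le> 1"
  obtains u where "S \<subseteq> span {u}"
proof -
  obtain BS where BS: "BS \<subseteq> S" "independent BS" "S \<subseteq> span BS" "card BS = dim S"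
    using basis_exists[of S] by blast
  have "finite BS"
    using independent_span_bound[OF assms(1) BS(2)] assms(2) by auto
  with BS(4) assms(3) obtain u where "BS \<subseteq> {u}"
    by (metis One_nat_def card_le_Suc0_iff_eq insertI1 subsetI)
  with BS(3) show thesis
    using that span_mono by blast
qed

lemma basis_insert2_of_complement:
  assumes B0: "finite B0" "card B0 = n" "independent B0" "span B0 = UNIV"
    and C: "subspace C"
    and decomp: "\<And>w. \<exists>c k l. c \<in> C \<and> w = c + scale k v + scale l y"
    and y_notin: "y \<notin> C" and v_notin: "\<And>k. v - scale k y \<notin> C"
  obtains z :: "nat \<Rightarrow> 'b" where
    "let B = insert v (insert y (z ` {1..n-2})) in
       card B = n \<and> independent B \<and> span B = UNIV"
    "z ` {1..n-2} \<subseteq> C"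
proof -
  obtain BC where BC: "BC \<subseteq> C" "independent BC" "C \<subseteq> span BC"
    by (meson basis_exists)
  have span_BC: "span BC = C"
    using span_subspace[OF BC(1,3) C] .
  have y_notin_span: "y \<notin> span BC"
    using y_notin span_BC by simp
  have v_notin_span: "v \<notin> span (insert y BC)"
    using v_notin span_BC by (simp add: span_breakdown_eq)
  define B where "B = insert v (insert y BC)"
  have indep_B: "independent B"
    unfolding B_def by (intro independent_insertI v_notin_span y_notin_span BC(2))
  have span_B: "span B = UNIV"
  proof -
    have "w \<in> span B" for w
    proof -
      obtain c k l where ckl: "c \<in> C" "w = c + scale k v + scale l y"
        using decomp by blast
      have "c \<in> span B"
        using ckl(1) span_BC span_mono[of BC B] unfolding B_def by auto
      moreover have "v \<in> span B" "y \<in> span B"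
        unfolding B_def by (simp_all add: span_base)
      ultimately show ?thesis
        unfolding ckl(2) by (intro span_add span_scale)
    qed
    then show ?thesis by auto
  qed
  have "finite B"
    using independent_span_bound[OF B0(1) indep_B] B0(4) by auto
  have "card B = n"
    using dim_unique[of B0 UNIV n] basis_card_eq_dim[of B UNIV] B0 indep_B span_B by auto
  moreover have "finite BC" "y \<notin> BC" "v \<notin> insert y BC"
    using \<open>finite B\<close> y_notin_span v_notin_span span_base unfolding B_def by auto
  ultimately have "card BC = n - 2"
    unfolding B_def by simp
  then obtain z where z: "bij_betw z {1..n-2} BC"
    using ex_bij_betw_nat_finite_1[OF \<open>finite BC\<close>] by auto
  then have "z ` {1..n-2} = BC"
    by (simp add: bij_betw_def)
  then show thesis
    using that[of z] \<open>card B = n\<close> indep_B span_B BC(1) unfolding B_def Let_def by simp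
qed

end

locale lie_alg = vector_space scale for scale :: "'a::field \<Rightarrow> 'b::ab_group_add \<Rightarrow> 'b" +
  fixes br :: "'b \<Rightarrow> 'b \<Rightarrow> 'b"
  assumes bracket_add_left: "br (x + y) z = br x z + br y z"
    and bracket_add_right: "br x (y + z) = br x y + br x z"
    and bracket_scale_left: "br (scale c x) y = scale c (br x y)"
    and bracket_scale_right: "br x (scale c y) = scale c (br x y)"
    and bracket_self: "br x x = 0"
    and jacobi: "br x (br y z) + br y (br z x) + br z (br x y) = 0"

lemma lie_alg_if_lie_algebra: "lie_algebra scl br \<Longrightarrow> lie_alg scl br"
  unfolding lie_algebra_def lie_alg_def lie_alg_axioms_def by blast

context lie_alg
begin

lemma bracket_zero_left [simp]: "br 0 y = 0"
  using bracket_add_left[of 0 0 y] by simp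

lemma bracket_zero_right [simp]: "br y 0 = 0"
  using bracket_add_right[of y 0 0] by simp

lemma bracket_antisym: "br x y = - br y x"
proof -
  have "0 = br (x + y) (x + y)"
    by (rule bracket_self[symmetric])
  also have "\<dots> = br x x + br x y + (br y x + br y y)"
    by (simp only: bracket_add_left bracket_add_right add_ac)
  finally have "br x y + br y x = 0"
    by (simp add: bracket_self)
  then show ?thesis
    by (simp add: eq_neg_iff_add_eq_0)
qed

lemma bracket_neg_left [simp]: "br (- x) y = - br x y"
  using bracket_add_left[of "- x" x y] by (simp add: eq_neg_iff_add_eq_0)

lemma bracket_diff_left: "br (x - z) y = br x y - br z y"
  using bracket_add_left[of x "- z" y] by simp

definition centralizer :: "'b set \<Rightarrow> 'b set" where
  "centralizer S = {a. \<forall>s\<in>S. br a s = 0}"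

lemma subspace_centralizer: "subspace (centralizer S)"
  unfolding centralizer_def
  by (rule subspaceI) (auto simp: bracket_add_left bracket_scale_left)

lemma lower_central_series_2_eq_0:
  assumes "\<And>a b w. br a (br b w) = 0"
  shows "lower_central_series scale br 2 = {0}"
proof -
  have "br a c = 0" if "c \<in> lower_central_series scale br 1" for a c
  proof -
    from that have "c \<in> span (range (\<lambda>(b, w). br b w))"
      by (simp add: lie_bracket_set_def image_def)
    then show ?thesis
    proof (induction rule: span_induct)
      case base
      show ?case
        by (rule subspaceI) (auto simp: bracket_add_right bracket_scale_right)
    qed (auto simp: assms)
  qed
  then have "{br a c |a c. a \<in> UNIV \<and> c \<in> lower_central_series scale br 1} \<subseteq> {0}"
    by auto
  moreover have series_2: "lower_central_series scale br 2 =
      span {br a c |a c. a \<in> UNIV \<and> c \<in> lower_central_series scale br 1}"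
    by (simp only: numeral_2_eq_2 One_nat_def lower_central_series.simps(2) lie_bracket_set_def)
  ultimately have "lower_central_series scale br 2 \<subseteq> span {0}"
    by (simp only: span_mono)
  then show ?thesis
    using series_2 span_zero by auto
qed

definition ad_in_line :: "'b \<Rightarrow> 'b \<Rightarrow> bool" where
  "ad_in_line x u \<longleftrightarrow> (\<forall>w. \<exists>c. br x w = scale c u)"

lemma ad_in_line_rescale:
  assumes "ad_in_line x u" "u = scale k v"
  shows "ad_in_line x v"
  using assms unfolding ad_in_line_def by (metis scale_scale)

end

locale lie_alg_breadth_le_1 = lie_alg +
  assumes ad_rank_le_1: "\<exists>u. ad_in_line x u"
begin

lemma ad_in_line_image:
  assumes "br x w \<noteq> 0"
  shows "ad_in_line x (br x w)"
proof -
  obtain u where u: "ad_in_line x u"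
    using ad_rank_le_1 by blast
  then obtain c where c: "br x w = scale c u"
    unfolding ad_in_line_def by blast
  have "c \<noteq> 0"
    using assms c by auto
  then have "u = scale (inverse c) (br x w)"
    using c by simp
  with u show ?thesis
    by (rule ad_in_line_rescale)
qed

context
  assumes bracket_eq_self_imp_0: "\<And>v y. br v y = v \<Longrightarrow> v = 0"
begin

lemma ad_eigenvalue_eq_0:
  assumes "br x p = scale c p" "p \<noteq> 0"
  shows "c = 0"
proof (rule ccontr)
  assume "c \<noteq> 0"
  then have "br p (scale (- 1 / c) x) = p"
    using assms(1) by (subst bracket_antisym) (simp add: bracket_scale_left)
  then show False
    using bracket_eq_self_imp_0 assms(2) by blast
qed

lemma ad_square_eq_0: "br x (br x w) = 0"
proof (cases "br x w = 0")
  case False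
  then obtain c where eigen: "br x (br x w) = scale c (br x w)"
    using ad_in_line_image unfolding ad_in_line_def by blast
  from this False have "c = 0"
    by (rule ad_eigenvalue_eq_0)
  with eigen show ?thesis
    by simp
qed simp

lemma ad_anticommute: "br a (br b w) = - br b (br a w)"
proof -
  have "0 = br (a + b) (br (a + b) w)"
    using ad_square_eq_0 by simp
  also have "\<dots> = br a (br a w) + br a (br b w) + (br b (br a w) + br b (br b w))"
    by (simp only: bracket_add_left bracket_add_right add_ac)
  finally have "br a (br b w) + br b (br a w) = 0"
    by (simp add: ad_square_eq_0)
  then show ?thesis
    by (simp add: eq_neg_iff_add_eq_0)
qed

lemma bracket_bracket_eq_0: "br a (br b w) = 0"
proof (cases "br b w = 0")
  case False
  then obtain t where t: "br b (br a w) = scale t (br b w)"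
    using ad_in_line_image unfolding ad_in_line_def by blast
  then have eigen: "br a (br b w) = scale (- t) (br b w)"
    using ad_anticommute[of a b w] by simp
  from this False have "- t = 0"
    by (rule ad_eigenvalue_eq_0)
  with eigen show ?thesis
    by simp
qed simp

end

lemma obtain_bracket_eq_self_if_not_nilpotent:
  assumes "\<not> lie_nilpotent scale br"
  obtains v y where "v \<noteq> 0" "br v y = v"
proof -
  have "\<not> (\<forall>v y. br v y = v \<longrightarrow> v = 0)"
  proof
    assume "\<forall>v y. br v y = v \<longrightarrow> v = 0"
    then have "lower_central_series scale br 2 = {0}"
      by (intro lower_central_series_2_eq_0 bracket_bracket_eq_0) blast
    with assms show False
      unfolding lie_nilpotent_def by blast
  qed
  with that show thesis
    by blast
qed

context
  fixes v y
  assumes v_ne_0: "v \<noteq> 0" and bracket_v_y: "br v y = v"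
begin

lemma bracket_y_v: "br y v = - v"
  using bracket_v_y bracket_antisym[of y v] by simp

lemma ad_in_line_y: "ad_in_line y v"
proof -
  have "br y v \<noteq> 0"
    using bracket_y_v v_ne_0 by simp
  then have "ad_in_line y (br y v)"
    by (rule ad_in_line_image)
  moreover have "br y v = scale (- 1) v"
    using bracket_y_v by simp
  ultimately show ?thesis
    by (rule ad_in_line_rescale)
qed

text \<open>Jacobi gives \<open>[a,v] = -c v\<close>; then \<open>b = a + (1 - c) y\<close> satisfies \<open>[b,v] = -v\<close>, so
  \<open>ad b\<close>, like \<open>ad y\<close>, maps into the line through \<open>v\<close>, and \<open>ad a = ad b - (1 - c) ad y\<close>.\<close>

lemma ad_in_line_if_commutes_y:
  assumes a_y: "br a y = 0"
  shows "ad_in_line a v"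
proof -
  obtain c where c: "br y (br a v) = scale c v"
    using ad_in_line_y unfolding ad_in_line_def by blast
  have "br y (br a v) + br a (br v y) + br v (br y a) = 0"
    by (rule jacobi)
  moreover have "br y a = 0"
    using a_y bracket_antisym[of y a] by simp
  ultimately have a_v: "br a v = scale (- c) v"
    using bracket_v_y c by (simp add: eq_neg_iff_add_eq_0 add.commute)
  define b where "b = a + scale (1 - c) y"
  have "br b v = - (scale c v + scale (1 - c) v)"
    by (simp add: b_def bracket_add_left bracket_scale_left a_v bracket_y_v)
  also have "\<dots> = scale (- 1) v"
    by (simp flip: scale_left_distrib)
  finally have b_v: "br b v = scale (- 1) v" .
  with v_ne_0 have "ad_in_line b (br b v)"
    by (intro ad_in_line_image) simp
  then have "ad_in_line b v"
    using b_v by (rule ad_in_line_rescale)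
  show ?thesis
    unfolding ad_in_line_def
  proof
    fix w
    obtain c1 c2 where "br b w = scale c1 v" "br y w = scale c2 v"
      using \<open>ad_in_line b v\<close> ad_in_line_y unfolding ad_in_line_def by blast
    moreover have "br a w = br b w - scale (1 - c) (br y w)"
      by (simp add: b_def bracket_add_left bracket_scale_left)
    ultimately have "br a w = scale (c1 - (1 - c) * c2) v"
      by (simp add: scale_left_diff_distrib)
    then show "\<exists>k. br a w = scale k v" ..
  qed
qed

lemma ad_in_line_v: "ad_in_line a v"
proof (cases "br a y = 0")
  case False
  obtain c where "br y a = scale c v"
    using ad_in_line_y unfolding ad_in_line_def by blast
  then have "br a y = scale (- c) v"
    using bracket_antisym[of a y] by simp
  with False show ?thesis
    using ad_in_line_image[of a y] ad_in_line_rescale by blast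
qed (rule ad_in_line_if_commutes_y)

lemma centralizer_complement:
  "\<exists>c k l. c \<in> centralizer {v, y} \<and> w = c + scale k v + scale l y"
proof -
  obtain l k where l: "br w v = scale l v" and k: "br w y = scale k v"
    using ad_in_line_v[of w] unfolding ad_in_line_def by blast
  define c where "c = w - scale k v + scale l y"
  have "c \<in> centralizer {v, y}"
    unfolding centralizer_def
    by (simp add: c_def bracket_diff_left bracket_add_left bracket_scale_left bracket_self
        l k bracket_y_v bracket_v_y)
  moreover have "w = c + scale k v + scale (- l) y"
    by (simp add: c_def)
  ultimately show ?thesis
    by blast
qed

lemma bracket_centralizer_eq_0:
  assumes a: "a \<in> centralizer {v, y}" and c: "c \<in> centralizer {v, y}"
  shows "br a c = 0"
proof -
  obtain m where m: "br a c = scale m v"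
    using ad_in_line_v unfolding ad_in_line_def by blast
  have "br y (br a c) + br a (br c y) + br c (br y a) = 0"
    by (rule jacobi)
  moreover have "br c y = 0" "br y a = 0"
    using a c bracket_antisym[of y a] unfolding centralizer_def by auto
  ultimately have "br y (br a c) = 0"
    by simp
  then have "scale m v = 0"
    using m by (simp add: bracket_scale_right bracket_y_v)
  with m show ?thesis
    by simp
qed

lemma centralizer_subset_center: "centralizer {v, y} \<subseteq> lie_center br"
proof
  fix a
  assume a: "a \<in> centralizer {v, y}"
  have "br a w = 0" for w
  proof -
    obtain c k l where c: "c \<in> centralizer {v, y}" and w: "w = c + scale k v + scale l y"
      using centralizer_complement by blast
    from a c have "br a c = 0"
      by (rule bracket_centralizer_eq_0)
    moreover have "br a v = 0" "br a y = 0"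
      using a unfolding centralizer_def by auto
    ultimately show ?thesis
      unfolding w by (simp add: bracket_add_right bracket_scale_right)
  qed
  then show "a \<in> lie_center br"
    unfolding lie_center_def by blast
qed

lemma basis_with_central_complement:
  assumes "finite B0" "card B0 = n" "independent B0" "span B0 = UNIV"
  obtains z :: "nat \<Rightarrow> 'b" where
    "let B = insert v (insert y (z ` {1..n-2})) in
       card B = n \<and> independent B \<and> span B = UNIV"
    "z ` {1..n-2} \<subseteq> lie_center br"
proof -
  have "y \<notin> centralizer {v, y}"
    using bracket_y_v v_ne_0 unfolding centralizer_def by auto
  moreover have "v - scale k y \<notin> centralizer {v, y}" for k
    using bracket_v_y v_ne_0
    by (simp add: centralizer_def bracket_diff_left bracket_scale_left bracket_self)
  ultimately obtain z where basis: "let B = insert v (insert y (z ` {1..n-2})) in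
       card B = n \<and> independent B \<and> span B = UNIV"
    and z_C: "z ` {1..n-2} \<subseteq> centralizer {v, y}"
    by (rule basis_insert2_of_complement[OF assms subspace_centralizer centralizer_complement])
  from z_C have "z ` {1..n-2} \<subseteq> lie_center br"
    using centralizer_subset_center by (rule subset_trans)
  with basis show thesis
    by (rule that)
qed

end

end

lemma elem_breadth_le_lie_breadth:
  assumes "vector_space scl" "has_dim scl n"
  shows "elem_breadth scl br x \<le> lie_breadth scl br"
proof -
  interpret vector_space scl
    by (fact assms(1))
  obtain B where B: "finite B" "card B = n" "span B = UNIV"
    using assms(2) unfolding has_dim_def by blast
  have "elem_breadth scl br w \<le> n" for w
    using dim_le_card[of "range (br w)" B] B unfolding elem_breadth_def by simp
  then have "range (elem_breadth scl br) \<subseteq> {..n}"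
    by auto
  then have "finite (range (elem_breadth scl br))"
    by (rule finite_subset) simp
  then show ?thesis
    unfolding lie_breadth_def by simp
qed

lemma lie_alg_breadth_le_1I:
  assumes "lie_algebra scl br" "has_dim scl n" "lie_breadth scl br \<le> 1"
  shows "lie_alg_breadth_le_1 scl br"
proof -
  interpret lie_alg scl br
    using assms(1) by (rule lie_alg_if_lie_algebra)
  obtain B where B: "finite B" "span B = UNIV"
    using assms(2) unfolding has_dim_def by blast
  have "\<exists>u. ad_in_line x u" for x
  proof -
    have "dim (range (br x)) \<le> 1"
      using elem_breadth_le_lie_breadth[OF vector_space_axioms assms(2), of br x] assms(3)
      unfolding elem_breadth_def by simp
    then obtain u where "range (br x) \<subseteq> span {u}"
      using subset_span_singleton_if_dim_le_1 B by blast
    then show ?thesis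
      unfolding ad_in_line_def span_singleton by blast
  qed
  then show ?thesis
    by unfold_locales
qed

theorem theorem2p6:
  fixes scl :: "'a::field \<Rightarrow> 'b::ab_group_add \<Rightarrow> 'b"
    and br :: "'b \<Rightarrow> 'b \<Rightarrow> 'b"
    and n :: nat
  assumes "(2::'a) \<noteq> 0"
    and "n \<ge> 2"
    and "lie_algebra scl br"
    and "has_dim scl n"
    and "lie_solvable scl br"
    and "\<not> lie_nilpotent scl br"
    and "lie_breadth scl br = 1"
  shows "\<exists>x y (z::nat \<Rightarrow> 'b).
           (let B = insert x (insert y (z ` {1..n-2})) in
              card B = n \<and> \<not> module.dependent scl B \<and> module.span scl B = UNIV) \<and>
           br x y = x \<and> (\<forall>i\<in>{1..n-2}. z i \<in> lie_center br)"
proof -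
  interpret lie_alg_breadth_le_1 scl br
    using assms(3,4,7) by (intro lie_alg_breadth_le_1I) simp_all
  obtain v y where v: "v \<noteq> 0" "br v y = v"
    using obtain_bracket_eq_self_if_not_nilpotent assms(6) by blast
  obtain B0 where "finite B0" "card B0 = n" "independent B0" "span B0 = UNIV"
    using assms(4) unfolding has_dim_def by blast
  then obtain z where basis: "let B = insert v (insert y (z ` {1..n-2})) in
      card B = n \<and> independent B \<and> span B = UNIV"
    and central: "z ` {1..n-2} \<subseteq> lie_center br"
    by (rule basis_with_central_complement[OF v])
  show ?thesis
    using basis v(2) central by (intro exI[of _ v] exI[of _ y] exI[of _ z] conjI) auto
qed

end
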